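(* Let $\boldsymbol\lambda\ne\boldsymbol\mu$ in $\Pi^l_m$ and $\lambda,\mu\in\Pi$ with $\boldsymbol\lambda\leftrightarrow\lambda$, $\boldsymbol\mu\leftrightarrow\mu$ and $|\lambda|=|\mu|=r$. Then $$a'_{\boldsymbol\lambda,\boldsymbol\mu}(1)=\varepsilon(\boldsymbol\lambda,\boldsymbol\mu)\sum_{\mathbf V}\alpha'_{\mathbf V}(1),$$ the sum running over all good sequences $\mathbf V$ with respect to $(\lambda,\mu)$, where $\varepsilon(\boldsymbol\lambda,\boldsymbol\mu)=(-1)^{\kappa(\mathbf d(\mu))+\ell(v(\omega.\boldsymbol\beta(\mu)))+\ell(v(\boldsymbol\beta(\lambda)))}$.
   Context: Fix $n,l,m\ge1$, $\mathbf s_l=(s_1,\dots,s_l)\in\mathbb Z^l$, $s=\sum s_b$. Each $k\in\mathbb Z$ is uniquely $k=c(k)+n(d(k)-1)+nl\,m(k)$, $c(k)\in\{1..n\}$, $d(k)\in\{1..l\}$; $\phi(k)=c(k)+n\,m(k)$. $\Pi^l_m$ is the set of $l$-tuples of partitions of total size $m$; $\boldsymbol\lambda\leftrightarrow\lambda$ iff $\{(\lambda^{(b)}_i+s_b+1-i,b)\}=\{(\phi(k),d(k)):k\in\{\lambda_i+s+1-i:i\ge1\}\}$. Tuples: for $\mathbf k\in\mathbb Z^r$, $\mathbf c(\mathbf k),\mathbf d(\mathbf k)$ componentwise; $\sigma.(k_1,\dots,k_r)=(k_{\sigma^{-1}(1)},\dots,k_{\sigma^{-1}(r)})$; $v(\mathbf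 k)$ is the minimal-length $\sigma$ with $\mathbf d(\mathbf k)=\sigma.\mathbf b$, $\mathbf b$ the weakly decreasing rearrangement of $\mathbf d(\mathbf k)$; $\ell$ Coxeter length; $\kappa(\mathbf a)=\#\{i<j:a_i=a_j\}$; $\omega$ longest element. For $|\lambda|=r$, $\boldsymbol\beta(\lambda)=(\lambda_i+s+1-i)_{i\le r}$, $\mathbf c(\lambda),\mathbf d(\lambda)$ those of $\boldsymbol\beta(\lambda)$. Wedge space $\Lambda^s$ (Uglov): $\mathbb C(q)$-span of symbols $v_{k_1}\wedge v_{k_2}\wedge\cdots$ ($k_i=s+1-i$ for $i\gg0$), with basis the ordered symbols ($k_1>k_2>\cdots$); any symbol is straightened by applying to adjacent pairs $v_{k_1}\wedge v_{k_2}$, $k_1\le k_2$, rules (R1)–(R4) (with $\gamma,\delta\in\{0..nl-1\}$ the residues mod $nl$ of $c(k_2)-c(k_1)$, $n(d(k_2)-d(k_1))$; sums over $i$ giving ordered two-factor wedges): (R1) $\gamma=\delta=0$: $v_{k_1}\wedge v_{k_2}=-v_{k_2}\wedge v_{k_1}$. (R2) $\gamma>0,\delta=0$: $=-q^{-1}v_{k_2}\wedge v_{k_1}-(q^{-2}-1)\sum_{i\ge1}q^{-2i+1}v_{k_2-nli}\wedge v_{k_1+nli}+(q^{-2}-1)\sum_{i\ge0}q^{-2i}v_{k_2-\gamma-nli}\wedge v_{k_1+\gamma+nli}$. (R3) $\gamma=0,\delta>0$: $=-qv_{k_2}\wedge v_{k_1}-(q^2-1)\sum_{i\ge1}q^{2i-1}v_{k_2-nli}\wedge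 v_{k_1+nli}+(q^2-1)\sum_{i\ge0}q^{2i}v_{k_2-\delta-nli}\wedge v_{k_1+\delta+nli}$. (R4) $\gamma,\delta>0$: $=-v_{k_2}\wedge v_{k_1}-(q-q^{-1})\sum_{i\ge1}\frac{q^{2i}-q^{-2i}}{q+q^{-1}}v_{k_2-nli}\wedge v_{k_1+nli}-(q-q^{-1})\sum_{i\ge0}\frac{q^{2i+1}+q^{-2i-1}}{q+q^{-1}}v_{k_2-\gamma-nli}\wedge v_{k_1+\gamma+nli}+(q-q^{-1})\sum_{i\ge0}\frac{q^{2i+1}+q^{-2i-1}}{q+q^{-1}}v_{k_2-\delta-nli}\wedge v_{k_1+\delta+nli}+(q-q^{-1})\sum_{i\ge0}\frac{q^{2i+2}-q^{-2i-2}}{q+q^{-1}}v_{k_2-\gamma-\delta-nli}\wedge v_{k_1+\gamma+\delta+nli}$. For $|\lambda|=r$: $v_\lambda=v_{k_1}\wedge v_{k_2}\wedge\cdots$, $k_i=\lambda_i+s+1-i$; $v_{\sigma.\lambda}$ is $v_\lambda$ with first $r$ indices replaced by $\sigma.\boldsymbol\beta(\lambda)$; $|\lambda,s\rangle=(-1)^{\ell(v(\boldsymbol\beta(\lambda)))}v_\lambda$; the involution is $\mathbb C$-linear, $q\mapsto q^{-1}$, $\overline{|\lambda,s\rangle}=(-1)^{\kappa(\mathbf d(\lambda))+\ell(v(\omega.\boldsymbol\beta(\lambda)))}q^{\kappa(\mathbf d(\lambda))-\kappa(\mathbf c(\lambda))}v_{\omega.\lambda}$. $a_{\boldsymbol\lambda,\boldsymbol\mu}(q)$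 is defined by $\overline{|\mu,s\rangle}=\sum_{\boldsymbol\lambda\in\Pi^l_m}a_{\boldsymbol\lambda,\boldsymbol\mu}(q)|\lambda,s\rangle$ ($\boldsymbol\lambda\leftrightarrow\lambda$). Sequences: all wedges below have first $r$ indices $\mathbf k=(k_1,\dots,k_r)$ followed by the fixed tail $s-r,s-r-1,\dots$; write $v_{\mathbf k}$. $v_{\mathbf k}\to v_{\mathbf l}$ ("adjacent") if there is $i$ with $k_i\le k_{i+1}$, $k_j>k_{j+1}$ for all $j<i$, $k_j=l_j$ for $j\notin\{i,i+1\}$, and $v_{l_i}\wedge v_{l_{i+1}}$ has nonzero coefficient $\alpha(v_{\mathbf k},v_{\mathbf l})$ in the straightening of $v_{k_i}\wedge v_{k_{i+1}}$ by the applicable rule; put $m(v_{\mathbf k},v_{\mathbf l})=0$ if $(l_i,l_{i+1})=(k_{i+1},k_i)$ (written $\overset{\bullet}{\to}$) and $1$ otherwise. An admissible sequence is $\mathbf V=(v_{\mathbf k_0}\to\cdots\to v_{\mathbf k_N})$; $\alpha_{\mathbf V}(q)=\prod_i\alpha(v_{\mathbf k_{i-1}},v_{\mathbf k_i})$, $m(\mathbf V)=\sum_i m(v_{\mathbf k_{i-1}},v_{\mathbf k_i})$. It is $(\lambda,\mu)$-admissible if $v_{\mathbf k_0}=v_{\omega.\mu}$ and $v_{\mathbf k_N}=v_\lambda$, and good if moreover $m(\mathbf V)=1$. *)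

theory Defs
  imports Complex_Main "HOL-Combinatorics.Permutations" "HOL-Analysis.Derivative"
begin

text \<open>k = c(k) + n (d(k) - 1) + n l m(k), with c(k) in 1..n and d(k) in 1..l.\<close>

definition cc :: "nat \<Rightarrow> nat \<Rightarrow> int \<Rightarrow> int" where
  "cc n l k = (k - 1) mod int n + 1"

definition dd :: "nat \<Rightarrow> nat \<Rightarrow> int \<Rightarrow> int" where
  "dd n l k = ((k - 1) div int n) mod int l + 1"

definition mm :: "nat \<Rightarrow> nat \<Rightarrow> int \<Rightarrow> int" where
  "mm n l k = (k - 1) div (int n * int l)"

definition phi :: "nat \<Rightarrow> nat \<Rightarrow> int \<Rightarrow> int" where
  "phi n l k = cc n l k + int n * mm n l k"

text \<open>A partition is a weakly decreasing list of positive naturals; its i-th part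
  (i \<ge> 1) is the (i-1)-th list entry, or 0 beyond the length.\<close>

definition is_partition :: "nat list \<Rightarrow> bool" where
  "is_partition p \<longleftrightarrow> sorted_wrt (\<ge>) p \<and> 0 \<notin> set p"

definition part :: "nat list \<Rightarrow> nat \<Rightarrow> nat" where
  "part p i = (if 1 \<le> i \<and> i \<le> length p then p ! (i - 1) else 0)"

definition psize :: "nat list \<Rightarrow> nat" where
  "psize p = sum_list p"

definition multipartitions :: "nat \<Rightarrow> nat \<Rightarrow> nat list list set" where
  "multipartitions l m = {P. length P = l \<and> (\<forall>p\<in>set P. is_partition p) \<and> sum_list (map psize P) = m}"

text \<open>The correspondence between multipartitions and partitions (sl = charge vector s_l,
  s = sum of its entries; component b is indexed 1..l and stored at list index b-1).\<close>
definition corresp :: "nat \<Rightarrow> nat \<Rightarrow> int list \<Rightarrow> nat list list \<Rightarrow> nat list \<Rightarrow> bool" where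
  "corresp n l sl P p \<longleftrightarrow>
     {(int (part (P ! (b - 1)) i) + sl ! (b - 1) + 1 - int i, int b) | i b. 1 \<le> i \<and> 1 \<le> b \<and> b \<le> l}
   = {(phi n l k, dd n l k) | k. \<exists>i\<ge>1. k = int (part p i) + sum_list sl + 1 - int i}"

definition beta :: "int \<Rightarrow> nat list \<Rightarrow> int list" where
  "beta s p = map (\<lambda>i. int (part p i) + s + 1 - int i) [1..<psize p + 1]"

text \<open>Permutations of positions 0..r-1 (0-based); sigma.(k)_j = k_{sigma^{-1}(j)}.\<close>
definition act :: "(nat \<Rightarrow> nat) \<Rightarrow> 'a list \<Rightarrow> 'a list" where
  "act \<sigma> k = map (\<lambda>j. k ! inv \<sigma> j) [0..<length k]"

definition cox_len :: "nat \<Rightarrow> (nat \<Rightarrow> nat) \<Rightarrow> nat" where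
  "cox_len r \<sigma> = card {(i, j). i < j \<and> j < r \<and> \<sigma> i > \<sigma> j}"

text \<open>ell(v(k)): the length of the minimal-length sigma with d(k) = sigma.b, b the
  weakly decreasing rearrangement of d(k).\<close>
definition len_v :: "nat \<Rightarrow> nat \<Rightarrow> int list \<Rightarrow> nat" where
  "len_v n l k = (let d = map (dd n l) k; b = rev (sort d) in
     Min (cox_len (length k) ` {\<sigma>. \<sigma> permutes {0..<length k} \<and> act \<sigma> b = d}))"

definition kappa :: "int list \<Rightarrow> nat" where
  "kappa a = card {(i, j). i < j \<and> j < length a \<and> a ! i = a ! j}"

text \<open>The longest element omega acts on r-tuples by reversal.\<close>
definition omega_act :: "'a list \<Rightarrow> 'a list" where
  "omega_act k = rev k"

text \<open>Coefficient of the two-factor wedge v_a \<and> v_b in the straightening of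
  v_{k1} \<and> v_{k2} (k1 \<le> k2) by the applicable rule (R1)-(R4).
  hit x i a b: the term v_{k2-x-nli} \<and> v_{k1+x+nli} equals v_a \<and> v_b and is ordered.\<close>
definition straight_coeff :: "nat \<Rightarrow> nat \<Rightarrow> int \<Rightarrow> int \<Rightarrow> int \<Rightarrow> int \<Rightarrow> real \<Rightarrow> real" where
  "straight_coeff n l k1 k2 a b q =
    (let N = int n * int l;
         \<gamma> = (cc n l k2 - cc n l k1) mod N;
         \<delta> = (int n * (dd n l k2 - dd n l k1)) mod N;
         hit = (\<lambda>x (i::nat). a = k2 - x - N * int i \<and> b = k1 + x + N * int i \<and> a > b);
         lead = (a = k2 \<and> b = k1);
         S = (\<lambda>x (lo::nat) f. \<Sum>i\<in>{i. lo \<le> i \<and> hit x i}. f i)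
     in if \<gamma> = 0 \<and> \<delta> = 0 then (if lead then -1 else 0)
        else if \<gamma> > 0 \<and> \<delta> = 0 then
          (if lead then - inverse q else 0)
          - (q powi (-2) - 1) * S 0 1 (\<lambda>i. q powi (- 2 * int i + 1))
          + (q powi (-2) - 1) * S \<gamma> 0 (\<lambda>i. q powi (- 2 * int i))
        else if \<gamma> = 0 \<and> \<delta> > 0 then
          (if lead then - q else 0)
          - (q\<^sup>2 - 1) * S 0 1 (\<lambda>i. q powi (2 * int i - 1))
          + (q\<^sup>2 - 1) * S \<delta> 0 (\<lambda>i. q powi (2 * int i))
        else
          (if lead then -1 else 0)
          - (q - inverse q) * S 0 1 (\<lambda>i. (q powi (2 * int i) - q powi (- 2 * int i)) / (q + inverse q))
          - (q - inverse q) * S \<gamma> 0 (\<lambda>i. (q powi (2 * int i + 1) + q powi (- 2 * int i - 1)) / (q + inverse q))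
          + (q - inverse q) * S \<delta> 0 (\<lambda>i. (q powi (2 * int i + 1) + q powi (- 2 * int i - 1)) / (q + inverse q))
          + (q - inverse q) * S (\<gamma> + \<delta>) 0 (\<lambda>i. (q powi (2 * int i + 2) - q powi (- 2 * int i - 2)) / (q + inverse q)))"

text \<open>Wedges are represented by their first r indices (a list k of length r); the fixed tail
  s-r, s-r-1, ... is implicit. Indices are 0-based here.
  step_pos k i: i is the leftmost position with k_i \<le> k_{i+1}.\<close>
definition step_pos :: "int list \<Rightarrow> nat \<Rightarrow> bool" where
  "step_pos k i \<longleftrightarrow> i + 1 < length k \<and> k ! i \<le> k ! (i + 1) \<and> (\<forall>j<i. k ! j > k ! (j + 1))"

definition step_coeff :: "nat \<Rightarrow> nat \<Rightarrow> int list \<Rightarrow> int list \<Rightarrow> real \<Rightarrow> real" where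
  "step_coeff n l k k' = (\<lambda>q. straight_coeff n l (k ! (THE i. step_pos k i)) (k ! ((THE i. step_pos k i) + 1))
                                  (k' ! (THE i. step_pos k i)) (k' ! ((THE i. step_pos k i) + 1)) q)"

definition adjacent :: "nat \<Rightarrow> nat \<Rightarrow> int list \<Rightarrow> int list \<Rightarrow> bool" where
  "adjacent n l k k' \<longleftrightarrow> length k' = length k \<and>
     (\<exists>i. step_pos k i \<and> (\<forall>j<length k. j \<noteq> i \<and> j \<noteq> i + 1 \<longrightarrow> k' ! j = k ! j) \<and>
          (\<lambda>q. straight_coeff n l (k ! i) (k ! (i + 1)) (k' ! i) (k' ! (i + 1)) q) \<noteq> (\<lambda>q. 0))"

definition mstep :: "int list \<Rightarrow> int list \<Rightarrow> nat" where
  "mstep k k' = (if \<exists>i. step_pos k i \<and> k' ! i = k ! (i + 1) \<and> k' ! (i + 1) = k ! i then 0 else 1)"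

definition admissible :: "nat \<Rightarrow> nat \<Rightarrow> int list list \<Rightarrow> bool" where
  "admissible n l V \<longleftrightarrow> V \<noteq> [] \<and> (\<forall>j. j + 1 < length V \<longrightarrow> adjacent n l (V ! j) (V ! (j + 1)))"

definition alphaV :: "nat \<Rightarrow> nat \<Rightarrow> int list list \<Rightarrow> real \<Rightarrow> real" where
  "alphaV n l V = (\<lambda>q. \<Prod>j<length V - 1. step_coeff n l (V ! j) (V ! (j + 1)) q)"

definition mV :: "int list list \<Rightarrow> nat" where
  "mV V = (\<Sum>j<length V - 1. mstep (V ! j) (V ! (j + 1)))"

definition good_seq :: "nat \<Rightarrow> nat \<Rightarrow> int \<Rightarrow> nat list \<Rightarrow> nat list \<Rightarrow> int list list \<Rightarrow> bool" where
  "good_seq n l s lam mu V \<longleftrightarrow> admissible n l V \<and> hd V = omega_act (beta s mu) \<and>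
     last V = beta s lam \<and> mV V = 1"

text \<open>E k w q = coefficient of the ordered wedge v_w in the expansion of v_k, obtained by
  straightening (always at the leftmost non-ordered adjacent pair).\<close>
definition straightening_ok :: "nat \<Rightarrow> nat \<Rightarrow> (int list \<Rightarrow> int list \<Rightarrow> real \<Rightarrow> real) \<Rightarrow> bool" where
  "straightening_ok n l E \<longleftrightarrow> (\<forall>k.
     (sorted_wrt (>) k \<longrightarrow> E k = (\<lambda>w q. if w = k then 1 else 0)) \<and>
     (\<not> sorted_wrt (>) k \<longrightarrow>
        E k = (\<lambda>w q. \<Sum>k'\<in>{k'. adjacent n l k k'}. step_coeff n l k k' q * E k' w q)))"

definition expansion :: "nat \<Rightarrow> nat \<Rightarrow> int list \<Rightarrow> int list \<Rightarrow> real \<Rightarrow> real" where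
  "expansion n l = (THE E. straightening_ok n l E)"

text \<open>a_{lambda,mu}(q) for partitions lambda, mu (of the same size r):
  bar|mu,s> = (-1)^(kappa(d(mu)) + ell(v(omega.beta(mu)))) q^(kappa(d(mu)) - kappa(c(mu))) v_{omega.mu},
  v_{omega.mu} = sum_w E(omega.beta(mu), w) v_w, v_lambda = (-1)^ell(v(beta(lambda))) |lambda,s>.\<close>
definition a_part :: "nat \<Rightarrow> nat \<Rightarrow> int \<Rightarrow> nat list \<Rightarrow> nat list \<Rightarrow> real \<Rightarrow> real" where
  "a_part n l s lam mu = (\<lambda>q.
     (-1) ^ (kappa (map (dd n l) (beta s mu)) + len_v n l (omega_act (beta s mu)))
     * q powi (int (kappa (map (dd n l) (beta s mu))) - int (kappa (map (cc n l) (beta s mu))))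
     * (-1) ^ len_v n l (beta s lam)
     * expansion n l (omega_act (beta s mu)) (beta s lam) q)"

definition a_coef :: "nat \<Rightarrow> nat \<Rightarrow> int list \<Rightarrow> nat list list \<Rightarrow> nat list list \<Rightarrow> real \<Rightarrow> real" where
  "a_coef n l sl P Q = a_part n l (sum_list sl)
     (THE p. is_partition p \<and> corresp n l sl P p) (THE p. is_partition p \<and> corresp n l sl Q p)"

definition eps :: "nat \<Rightarrow> nat \<Rightarrow> int \<Rightarrow> nat list \<Rightarrow> nat list \<Rightarrow> real" where
  "eps n l s lam mu = (-1) ^ (kappa (map (dd n l) (beta s mu)) + len_v n l (omega_act (beta s mu))
                              + len_v n l (beta s lam))"

end

theory Submission
  imports Defs
begin

(* Straightening is well founded (a weight strictly decreases along every step that changes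
   the wedge), so the coefficient of v_lambda in v_{omega.mu} is the sum of alpha_V(q) over all
   admissible sequences V from omega.beta(mu) to beta(lambda). At q = 1 a step has coefficient -1
   if it is a plain transposition and 0 otherwise. A sequence of transpositions only permutes
   beta(mu), and beta(lambda) <> beta(mu) are both strictly decreasing, so every V contains a
   step of the other kind: alpha_V(1) = 0, and by the product rule alpha_V'(1) = 0 unless V
   contains exactly one such step, i.e. V is good. Hence a(q) = eps q^e F(q) with F(1) = 0,
   and a'(1) = eps F'(1) = eps times the sum of alpha_V'(1) over the good V. *)

lemma differentiable_if_const:
  "(C \<Longrightarrow> f differentiable F) \<Longrightarrow> (\<not> C \<Longrightarrow> g differentiable F) \<Longrightarrow>
   (\<lambda>x. if C then f x else g x) differentiable F"
  by (cases C) auto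

lemma differentiable_sum':
  "(\<And>a. a \<in> A \<Longrightarrow> f a differentiable F) \<Longrightarrow> (\<lambda>x. \<Sum>a\<in>A. f a x) differentiable F"
  by (cases "finite A") auto

lemma differentiable_prod:
  fixes f :: "'i \<Rightarrow> 'a::real_normed_vector \<Rightarrow> 'b::real_normed_field"
  shows "(\<And>a. a \<in> A \<Longrightarrow> f a differentiable (at x within s)) \<Longrightarrow>
    (\<lambda>x. \<Prod>a\<in>A. f a x) differentiable (at x within s)"
  by (induction A rule: infinite_finite_induct) auto

lemma deriv_mult_at_root:
  fixes f g :: "real \<Rightarrow> real"
  assumes "f differentiable (at x)" "g differentiable (at x)" "g x = 0"
  shows "deriv (\<lambda>q. f q * g q) x = f x * deriv g x"
proof -
  have "((\<lambda>q. f q * g q) has_field_derivative deriv f x * g x + deriv g x * f x) (at x)"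
    using assms(1,2) by (intro DERIV_mult) (simp_all add: DERIV_deriv_iff_real_differentiable)
  then show ?thesis using assms(3) by (simp add: DERIV_imp_deriv)
qed

lemma strict_antisorted_equal:
  fixes xs ys :: "'a::linorder list"
  shows "sorted_wrt (>) xs \<Longrightarrow> sorted_wrt (>) ys \<Longrightarrow> set xs = set ys \<Longrightarrow> xs = ys"
  using strict_sorted_equal[of "rev ys" "rev xs"] by (simp add: sorted_wrt_rev)

lemma card_greater_in_range:
  fixes F :: "nat \<Rightarrow> 'a::linorder"
  assumes "\<And>i j. i < j \<Longrightarrow> F j < F i"
  shows "card {x \<in> range F. F j < x} = j"
proof -
  have less_iff: "F j < F i \<longleftrightarrow> i < j" for i j
    using assms by (metis less_asym linorder_neqE_nat)
  then have "{x \<in> range F. F j < x} = F ` {..<j}" by auto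
  moreover have "inj F" using less_iff by (metis injI less_irrefl linorder_neqE_nat)
  ultimately show ?thesis by (simp add: card_image inj_on_subset)
qed

lemma strict_antimono_range_eq:
  fixes F G :: "nat \<Rightarrow> 'a::linorder"
  assumes "\<And>i j. i < j \<Longrightarrow> F j < F i" "\<And>i j. i < j \<Longrightarrow> G j < G i" "range F = range G"
  shows "F = G"
proof
  fix j
  obtain j' where j': "F j = G j'" using assms(3) by (metis rangeE rangeI)
  have "j = j'"
    using card_greater_in_range[where F=F and j=j, OF assms(1)]
      card_greater_in_range[where F=G and j=j', OF assms(2)]
    unfolding j' assms(3) by simp
  then show "F j = G j" using j' by simp
qed

section \<open>Straightening coefficients\<close>

(* The ordered terms v_{k2-t} and v_{k1+t} with t > 0 of the rules (R2)-(R4). *)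
definition inner_pair :: "int \<Rightarrow> int \<Rightarrow> int \<Rightarrow> int \<Rightarrow> bool" where
  "inner_pair k1 k2 a b \<longleftrightarrow> k1 < b \<and> b < a \<and> a < k2 \<and> a + b = k1 + k2"

lemma straight_coeff_at_1: "straight_coeff n l k1 k2 a b 1 = (if a = k2 \<and> b = k1 then -1 else 0)"
  unfolding straight_coeff_def Let_def by simp

lemma straight_coeff_diag: "straight_coeff n l k k k k q = -1"
  unfolding straight_coeff_def Let_def by simp

lemma straight_coeff_eq_0:
  assumes "n \<ge> 1" "l \<ge> 1" "\<not> (a = k2 \<and> b = k1)" "\<not> inner_pair k1 k2 a b"
  shows "straight_coeff n l k1 k2 a b q = 0"
proof -
  have N: "int n * int l > 0" using assms(1,2) by simp
  define hits where "hits x lo =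
    {i. lo \<le> i \<and> a = k2 - x - int n * int l * int i \<and> b = k1 + x + int n * int l * int i \<and> b < a}"
    for x :: int and lo :: nat
  have no_hits: "hits x lo = {}" if "0 \<le> x" "0 < x \<or> 0 < lo" for x lo
  proof -
    have "0 < x + int n * int l * int i" if "lo \<le> i" for i
    proof -
      have "0 < int n * int l * int i" if "0 < i" using N that by simp
      moreover have "0 \<le> int n * int l * int i" using N by simp
      ultimately show ?thesis using \<open>0 \<le> x\<close> \<open>0 < x \<or> 0 < lo\<close> \<open>lo \<le> i\<close> by linarith
    qed
    then show ?thesis using assms(4) unfolding hits_def inner_pair_def by force
  qed
  define \<gamma> where "\<gamma> = (cc n l k2 - cc n l k1) mod (int n * int l)"
  define \<delta> where "\<delta> = (int n * (dd n l k2 - dd n l k1)) mod (int n * int l)"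
  have "\<gamma> \<ge> 0" "\<delta> \<ge> 0" using pos_mod_sign[OF N] unfolding \<gamma>_def \<delta>_def by blast+
  then consider "\<gamma> = 0 \<and> \<delta> = 0" | "\<gamma> > 0 \<and> \<delta> = 0" | "\<gamma> = 0 \<and> \<delta> > 0" | "\<gamma> > 0 \<and> \<delta> > 0"
    by linarith
  then show ?thesis
    unfolding straight_coeff_def Let_def \<gamma>_def[symmetric] \<delta>_def[symmetric] hits_def[symmetric]
    by cases (use assms(3) in \<open>auto simp: no_hits\<close>)
qed

lemma straight_coeff_differentiable: "straight_coeff n l k1 k2 a b differentiable (at 1)"
  unfolding straight_coeff_def Let_def
  by (intro differentiable_if_const differentiable_sum' differentiable_add differentiable_diff
      differentiable_mult differentiable_minus differentiable_const differentiable_ident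
      differentiable_power differentiable_power_int differentiable_divide differentiable_inverse; simp)

section \<open>Adjacent wedges\<close>

lemma step_pos_unique: "step_pos k i \<Longrightarrow> step_pos k j \<Longrightarrow> i = j"
  unfolding step_pos_def by (metis linorder_neqE_nat not_le)

lemma The_step_pos: "step_pos k i \<Longrightarrow> (THE i. step_pos k i) = i"
  using step_pos_unique by blast

lemma not_step_pos_if_sorted: "sorted_wrt (>) k \<Longrightarrow> \<not> step_pos k i"
  unfolding step_pos_def using sorted_wrt_nth_less[of "(>)" k i "i + 1"] by force

lemma step_pos_exists:
  assumes "\<not> sorted_wrt (>) k"
  obtains i where "step_pos k i"
proof -
  have ex: "\<exists>i. i + 1 < length k \<and> k ! i \<le> k ! (i + 1)"
    using assms sorted_wrt_iff_nth_Suc_transp[of "(>)" k] by (auto simp: transp_def not_less)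
  define i where "i = (LEAST i. i + 1 < length k \<and> k ! i \<le> k ! (i + 1))"
  have "i + 1 < length k \<and> k ! i \<le> k ! (i + 1)"
    unfolding i_def by (rule LeastI_ex[OF ex])
  moreover have "k ! (j + 1) < k ! j" if "j < i" for j
    using not_less_Least[OF that[unfolded i_def]] that calculation by auto
  ultimately show ?thesis using that unfolding step_pos_def by blast
qed

lemma step_coeff_eq:
  "step_pos k i \<Longrightarrow> step_coeff n l k k' q = straight_coeff n l (k ! i) (k ! (i + 1)) (k' ! i) (k' ! (i + 1)) q"
  unfolding step_coeff_def by (simp add: The_step_pos)

lemma mstep_eq:
  "step_pos k i \<Longrightarrow> mstep k k' = (if k' ! i = k ! (i + 1) \<and> k' ! (i + 1) = k ! i then 0 else 1)"
  unfolding mstep_def using step_pos_unique by metis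

lemma adjacent_imp_step_pos: "adjacent n l k k' \<Longrightarrow> \<exists>i. step_pos k i"
  unfolding adjacent_def by blast

lemma adjacentE:
  assumes "n \<ge> 1" "l \<ge> 1" "adjacent n l k k'" "step_pos k i"
  obtains a b where "k' = k[i := a, i + 1 := b]"
    "a = k ! (i + 1) \<and> b = k ! i \<or> inner_pair (k ! i) (k ! (i + 1)) a b"
proof -
  obtain i' where i': "step_pos k i'" "length k' = length k"
    "\<forall>j<length k. j \<noteq> i' \<and> j \<noteq> i' + 1 \<longrightarrow> k' ! j = k ! j"
    and nonzero: "(\<lambda>q. straight_coeff n l (k ! i') (k ! (i' + 1)) (k' ! i') (k' ! (i' + 1)) q) \<noteq> (\<lambda>q. 0)"
    using assms(3) unfolding adjacent_def by blast
  have "i' = i" using step_pos_unique i'(1) assms(4) by blast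
  note i = i'[unfolded \<open>i' = i\<close>] and nonzero = nonzero[unfolded \<open>i' = i\<close>]
  have "k' = k[i := k' ! i, i + 1 := k' ! (i + 1)]"
    using i unfolding step_pos_def by (intro nth_equalityI) (auto simp: nth_list_update)
  moreover have "k' ! i = k ! (i + 1) \<and> k' ! (i + 1) = k ! i \<or>
      inner_pair (k ! i) (k ! (i + 1)) (k' ! i) (k' ! (i + 1))"
  proof (rule ccontr)
    assume "\<not> ?thesis"
    then have "straight_coeff n l (k ! i) (k ! (i + 1)) (k' ! i) (k' ! (i + 1)) q = 0" for q
      by (intro straight_coeff_eq_0[OF assms(1,2)]) auto
    then show False using nonzero by auto
  qed
  ultimately show ?thesis using that by blast
qed

lemma adjacent_selfD:
  assumes "n \<ge> 1" "l \<ge> 1" "adjacent n l k k" "step_pos k i"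
  shows "k ! i = k ! (i + 1)"
proof -
  obtain a b where eq: "k = k[i := a, i + 1 := b]"
    and ab: "a = k ! (i + 1) \<and> b = k ! i \<or> inner_pair (k ! i) (k ! (i + 1)) a b"
    using adjacentE[OF assms] .
  have len: "i + 1 < length k" using assms(4) unfolding step_pos_def by blast
  have "k ! i = a" "k ! (i + 1) = b"
    using arg_cong[where f="\<lambda>xs. xs ! i", OF eq] arg_cong[where f="\<lambda>xs. xs ! (i + 1)", OF eq] len
    by (simp_all add: nth_list_update)
  then show ?thesis using ab unfolding inner_pair_def by auto
qed

lemma adjacent_stuck_iff:
  assumes "n \<ge> 1" "l \<ge> 1" "step_pos k i" "k ! i = k ! (i + 1)"
  shows "adjacent n l k k' \<longleftrightarrow> k' = k"
proof
  assume "adjacent n l k k'"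
  then obtain a b where "k' = k[i := a, i + 1 := b]"
    and "a = k ! (i + 1) \<and> b = k ! i \<or> inner_pair (k ! i) (k ! (i + 1)) a b"
    using adjacentE[OF assms(1,2) _ assms(3)] by blast
  then have "k' = k[i := k ! i, i + 1 := k ! (i + 1)]"
    using assms(4) unfolding inner_pair_def by auto
  then show "k' = k" by simp
next
  assume "k' = k"
  have "(\<lambda>q. straight_coeff n l (k ! i) (k ! (i + 1)) (k ! i) (k ! (i + 1)) q) \<noteq> (\<lambda>q. 0)"
    unfolding assms(4) straight_coeff_diag by (metis zero_neq_neg_one)
  then show "adjacent n l k k'"
    unfolding adjacent_def \<open>k' = k\<close> using assms(3) by blast
qed

lemma finite_adjacent:
  assumes "n \<ge> 1" "l \<ge> 1"
  shows "finite {k'. adjacent n l k k'}"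
proof (cases "\<exists>i. step_pos k i")
  case False
  then have "{k'. adjacent n l k k'} = {}" using adjacent_imp_step_pos by blast
  then show ?thesis by simp
next
  case True
  then obtain i where i: "step_pos k i" ..
  let ?I = "{k ! i..k ! (i + 1)}"
  have "{k'. adjacent n l k k'} \<subseteq> (\<lambda>(a, b). k[i := a, i + 1 := b]) ` (?I \<times> ?I)"
  proof
    fix k' assume "k' \<in> {k'. adjacent n l k k'}"
    then obtain a b where "k' = k[i := a, i + 1 := b]"
      "a = k ! (i + 1) \<and> b = k ! i \<or> inner_pair (k ! i) (k ! (i + 1)) a b"
      using adjacentE[OF assms _ i] by blast
    moreover have "k ! i \<le> k ! (i + 1)" using i unfolding step_pos_def by blast
    ultimately show "k' \<in> (\<lambda>(a, b). k[i := a, i + 1 := b]) ` (?I \<times> ?I)"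
      unfolding inner_pair_def by force
  qed
  then show ?thesis by (rule finite_subset) auto
qed

lemma sum_nth_update_two:
  fixes f :: "nat \<Rightarrow> 'a \<Rightarrow> 'b::ab_group_add"
  assumes "i + 1 < length k"
  shows "(\<Sum>j<length k. f j (k[i := a, i + 1 := b] ! j))
    = (\<Sum>j<length k. f j (k ! j)) + (f i a - f i (k ! i)) + (f (i + 1) b - f (i + 1) (k ! (i + 1)))"
proof -
  let ?k' = "k[i := a, i + 1 := b]"
  have "(\<Sum>j<length k. f j (?k' ! j) - f j (k ! j)) = (\<Sum>j\<in>{i, i + 1}. f j (?k' ! j) - f j (k ! j))"
    using assms by (intro sum.mono_neutral_right) (auto simp: nth_list_update)
  then show ?thesis using assms by (simp add: sum_subtractf algebra_simps nth_list_update)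
qed

(* A step at positions i, i+1 keeps k_i + k_{i+1}, lowers k_{i+1} and stays above k_i. *)
definition wedge_weight :: "int list \<Rightarrow> nat" where
  "wedge_weight k = nat (\<Sum>j<length k. int j * (k ! j - Min (set k)))"

lemma wedge_weight_decreasing:
  assumes "n \<ge> 1" "l \<ge> 1" "adjacent n l k k'" "k' \<noteq> k"
  shows "wedge_weight k' < wedge_weight k"
proof -
  obtain i where i: "step_pos k i" using adjacent_imp_step_pos[OF assms(3)] ..
  then obtain a b where k': "k' = k[i := a, i + 1 := b]"
    and ab: "a = k ! (i + 1) \<and> b = k ! i \<or> inner_pair (k ! i) (k ! (i + 1)) a b"
    using adjacentE[OF assms(1-3)] by blast
  have len: "i + 1 < length k" and "k ! i \<le> k ! (i + 1)" using i unfolding step_pos_def by auto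
  moreover have "k ! i \<noteq> k ! (i + 1)" using adjacent_stuck_iff[OF assms(1,2) i] assms(3,4) by blast
  ultimately have ab': "k ! i \<le> b" "b \<le> a" "b < k ! (i + 1)" "a + b = k ! i + k ! (i + 1)"
    using ab unfolding inner_pair_def by auto
  define W where "W xs m = (\<Sum>j<length k. int j * (xs ! j - m))" for xs m
  define m where "m = Min (set k)"
  define m' where "m' = Min (set k')"
  have "m \<le> k ! i" unfolding m_def using len by simp
  have "set k' \<subseteq> insert b (insert a (set k))"
    using set_update_subset_insert[of "k[i := a]" "i + 1" b] set_update_subset_insert[of k i a]
    unfolding k' by blast
  moreover have "m \<le> x" if "x \<in> set k" for x unfolding m_def using that by simp
  moreover have "k' \<noteq> []" using len k' by auto
  ultimately have "m \<le> m'" unfolding m'_def using \<open>m \<le> k ! i\<close> ab'(1,2)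
    by (intro Min.boundedI) auto
  have "0 \<le> W k' m'" unfolding W_def m'_def using k' by (intro sum_nonneg) auto
  moreover have "W k' m' \<le> W k' m" unfolding W_def using \<open>m \<le> m'\<close> by (intro sum_mono mult_left_mono) auto
  moreover have "W k' m = W k m + int i * ((a + b) - (k ! i + k ! (i + 1))) + (b - k ! (i + 1))"
    unfolding W_def k' using sum_nth_update_two[OF len, of "\<lambda>j x. int j * (x - m)" a b]
    by (simp add: algebra_simps)
  then have "W k' m = W k m + (b - k ! (i + 1))" using ab'(4) by simp
  ultimately have "W k' m' < W k m" using ab'(3) by linarith
  moreover have "wedge_weight k' = nat (W k' m')" "wedge_weight k = nat (W k m)"
    unfolding wedge_weight_def W_def m_def m'_def k' by simp_all
  ultimately show ?thesis using \<open>0 \<le> W k' m'\<close> by linarith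
qed

lemma adjacent_induct:
  assumes "n \<ge> 1" "l \<ge> 1" "\<And>k. (\<And>k'. adjacent n l k k' \<Longrightarrow> k' \<noteq> k \<Longrightarrow> P k') \<Longrightarrow> P k"
  shows "P k"
proof (induction k rule: measure_induct_rule[of wedge_weight])
  case (less k)
  show ?case
  proof (rule assms(3))
    fix k' assume "adjacent n l k k'" "k' \<noteq> k"
    then show "P k'" using less wedge_weight_decreasing[OF assms(1,2)] by blast
  qed
qed

section \<open>The straightening expansion as a sum over admissible sequences\<close>

lemma not_admissible_Nil [simp]: "\<not> admissible n l []"
  unfolding admissible_def by simp

lemma admissible_Cons:
  "admissible n l (k # V) \<longleftrightarrow> V = [] \<or> adjacent n l k (hd V) \<and> admissible n l V"
proof -
  have "(\<forall>j. j + 1 < length (k # V) \<longrightarrow> adjacent n l ((k # V) ! j) ((k # V) ! (j + 1))) \<longleftrightarrow>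
      (V \<noteq> [] \<longrightarrow> adjacent n l k (V ! 0)) \<and> (\<forall>j. j + 1 < length V \<longrightarrow> adjacent n l (V ! j) (V ! (j + 1)))"
    by (auto simp: nth_Cons split: nat.split)
  then show ?thesis unfolding admissible_def by (auto simp: hd_conv_nth)
qed

definition admissible_seqs :: "nat \<Rightarrow> nat \<Rightarrow> int list \<Rightarrow> int list \<Rightarrow> int list list set" where
  "admissible_seqs n l k w = {V. admissible n l V \<and> hd V = k \<and> last V = w}"

lemma admissible_seqs_from_sorted:
  assumes "sorted_wrt (>) k"
  shows "admissible_seqs n l k w = (if w = k then {[k]} else {})"
proof -
  have "\<not> adjacent n l k k'" for k'
    using assms not_step_pos_if_sorted adjacent_imp_step_pos by blast
  then have "V = [k]" if "admissible n l V" "hd V = k" for V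
    using that by (cases V) (auto simp: admissible_Cons)
  then have "admissible_seqs n l k w \<subseteq> {[k]} \<inter> {V. last V = w}" unfolding admissible_seqs_def by blast
  moreover have "[k] \<in> admissible_seqs n l k k" unfolding admissible_seqs_def by (simp add: admissible_Cons)
  ultimately show ?thesis by auto
qed

lemma admissible_seqs_unfold:
  assumes "w \<noteq> k"
  shows "admissible_seqs n l k w = (\<Union>k'\<in>{k'. adjacent n l k k'}. Cons k ` admissible_seqs n l k' w)"
proof
  show "admissible_seqs n l k w \<subseteq> (\<Union>k'\<in>{k'. adjacent n l k k'}. Cons k ` admissible_seqs n l k' w)"
  proof
    fix V assume V: "V \<in> admissible_seqs n l k w"
    then obtain V' where V': "V = k # V'" unfolding admissible_seqs_def by (cases V) auto
    with V assms have "adjacent n l k (hd V')" "V' \<in> admissible_seqs n l (hd V') w"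
      unfolding admissible_seqs_def by (auto simp: admissible_Cons)
    then show "V \<in> (\<Union>k'\<in>{k'. adjacent n l k k'}. Cons k ` admissible_seqs n l k' w)"
      unfolding V' by blast
  qed
qed (auto simp: admissible_seqs_def admissible_Cons)

lemma last_eq_if_stuck:
  assumes "n \<ge> 1" "l \<ge> 1" "step_pos k i" "k ! i = k ! (i + 1)"
  shows "admissible n l V \<Longrightarrow> hd V = k \<Longrightarrow> last V = k"
proof (induction V)
  case (Cons k' V)
  then show ?case using adjacent_stuck_iff[OF assms] by (auto simp: admissible_Cons)
qed simp

lemma finite_admissible_seqs:
  assumes "n \<ge> 1" "l \<ge> 1" "sorted_wrt (>) w"
  shows "finite (admissible_seqs n l k w)"
proof (induction k rule: adjacent_induct[OF assms(1,2)])
  case (1 k)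
  show ?case
  proof (cases "sorted_wrt (>) k")
    case True
    then show ?thesis by (simp add: admissible_seqs_from_sorted)
  next
    case False
    then have "w \<noteq> k" using assms(3) by blast
    obtain i where i: "step_pos k i" using False by (rule step_pos_exists)
    show ?thesis
    proof (cases "k ! i = k ! (i + 1)")
      case True
      then have "admissible_seqs n l k w = {}"
        using last_eq_if_stuck[OF assms(1,2) i True] \<open>w \<noteq> k\<close> unfolding admissible_seqs_def by auto
      then show ?thesis by simp
    next
      case False
      then have "k' \<noteq> k" if "adjacent n l k k'" for k'
        using adjacent_selfD[OF assms(1,2) _ i] that by blast
      then show ?thesis
        unfolding admissible_seqs_unfold[OF \<open>w \<noteq> k\<close>] using 1 finite_adjacent[OF assms(1,2)] by blast
    qed
  qed
qed

lemma alphaV_Cons: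
  "V \<noteq> [] \<Longrightarrow> alphaV n l (k # V) q = step_coeff n l k (hd V) q * alphaV n l V q"
  unfolding alphaV_def by (cases V) (simp_all add: prod.lessThan_Suc_shift del: prod.lessThan_Suc)

lemma mV_Cons: "V \<noteq> [] \<Longrightarrow> mV (k # V) = mstep k (hd V) + mV V"
  unfolding mV_def by (cases V) (simp_all add: sum.lessThan_Suc_shift del: sum.lessThan_Suc)

definition seq_expansion :: "nat \<Rightarrow> nat \<Rightarrow> int list \<Rightarrow> int list \<Rightarrow> real \<Rightarrow> real" where
  "seq_expansion n l k w q = (if sorted_wrt (>) w then \<Sum>V\<in>admissible_seqs n l k w. alphaV n l V q else 0)"

lemma seq_expansion_sorted:
  "sorted_wrt (>) k \<Longrightarrow> seq_expansion n l k = (\<lambda>w q. if w = k then 1 else 0)"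
  by (auto intro!: ext simp: seq_expansion_def admissible_seqs_from_sorted alphaV_def)

lemma seq_expansion_unfold:
  assumes "n \<ge> 1" "l \<ge> 1" "\<not> sorted_wrt (>) k"
  shows "seq_expansion n l k w q
    = (\<Sum>k'\<in>{k'. adjacent n l k k'}. step_coeff n l k k' q * seq_expansion n l k' w q)"
proof (cases "sorted_wrt (>) w")
  case True
  then have "w \<noteq> k" using assms(3) by blast
  let ?A = "{k'. adjacent n l k k'}"
  have "(\<Sum>V\<in>admissible_seqs n l k w. alphaV n l V q) = (\<Sum>k'\<in>?A. \<Sum>V\<in>Cons k ` admissible_seqs n l k' w. alphaV n l V q)"
    unfolding admissible_seqs_unfold[OF \<open>w \<noteq> k\<close>]
    using finite_adjacent[OF assms(1,2)] finite_admissible_seqs[OF assms(1,2) True]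
    by (intro sum.UNION_disjoint) (auto simp: admissible_seqs_def)
  also have "\<dots> = (\<Sum>k'\<in>?A. \<Sum>V\<in>admissible_seqs n l k' w. step_coeff n l k k' q * alphaV n l V q)"
  proof (rule sum.cong[OF refl])
    fix k'
    have "(\<Sum>V\<in>Cons k ` admissible_seqs n l k' w. alphaV n l V q) = (\<Sum>V\<in>admissible_seqs n l k' w. alphaV n l (k # V) q)"
      by (simp add: sum.reindex)
    also have "\<dots> = (\<Sum>V\<in>admissible_seqs n l k' w. step_coeff n l k k' q * alphaV n l V q)"
      by (intro sum.cong refl) (auto simp: admissible_seqs_def intro: alphaV_Cons)
    finally show "(\<Sum>V\<in>Cons k ` admissible_seqs n l k' w. alphaV n l V q)
      = (\<Sum>V\<in>admissible_seqs n l k' w. step_coeff n l k k' q * alphaV n l V q)" .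
  qed
  finally show ?thesis
    using True by (simp add: seq_expansion_def sum_distrib_left)
qed (simp add: seq_expansion_def)

lemma straightening_ok_seq_expansion:
  "n \<ge> 1 \<Longrightarrow> l \<ge> 1 \<Longrightarrow> straightening_ok n l (seq_expansion n l)"
  unfolding straightening_ok_def using seq_expansion_sorted seq_expansion_unfold by blast

lemma straightening_ok_unique:
  assumes "n \<ge> 1" "l \<ge> 1" "straightening_ok n l E" "straightening_ok n l E'"
  shows "E = E'"
proof
  fix k
  show "E k = E' k"
  proof (induction k rule: adjacent_induct[OF assms(1,2)])
    case (1 k)
    show ?case
    proof (cases "sorted_wrt (>) k")
      case True
      then show ?thesis using assms(3,4) unfolding straightening_ok_def by simp
    next
      case False
      then have E: "F k = (\<lambda>w q. \<Sum>k'\<in>{k'. adjacent n l k k'}. step_coeff n l k k' q * F k' w q)"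
        if "straightening_ok n l F" for F
        using that unfolding straightening_ok_def by blast
      obtain i where i: "step_pos k i" using False by (rule step_pos_exists)
      show ?thesis
      proof (cases "k ! i = k ! (i + 1)")
        case True
        \<comment> \<open>(R1) with k_1 = k_2 gives v_k = - v_k\<close>
        have "F k w q = - F k w q" if "straightening_ok n l F" for F w q
          using fun_cong[OF fun_cong[OF E[OF that]], of w q] adjacent_stuck_iff[OF assms(1,2) i True]
            step_coeff_eq[OF i] True straight_coeff_diag by simp
        then have "F k = (\<lambda>w q. 0)" if "straightening_ok n l F" for F
          using that by fastforce
        then show ?thesis using assms(3,4) by simp
      next
        case False
        then have "k' \<noteq> k" if "adjacent n l k k'" for k'
          using adjacent_selfD[OF assms(1,2) _ i] that by blast
        then show ?thesis using E[OF assms(3)] E[OF assms(4)] 1 by simp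
      qed
    qed
  qed
qed

lemma expansion_eq_seq_expansion: "n \<ge> 1 \<Longrightarrow> l \<ge> 1 \<Longrightarrow> expansion n l = seq_expansion n l"
  unfolding expansion_def
  using straightening_ok_seq_expansion straightening_ok_unique by blast

lemma expansion_eq_sum_alphaV:
  "n \<ge> 1 \<Longrightarrow> l \<ge> 1 \<Longrightarrow> sorted_wrt (>) w \<Longrightarrow> expansion n l k w = (\<lambda>q. \<Sum>V\<in>admissible_seqs n l k w. alphaV n l V q)"
  by (simp add: expansion_eq_seq_expansion seq_expansion_def fun_eq_iff)

section \<open>Admissible sequences at q = 1\<close>

lemma step_coeff_at_1:
  assumes "adjacent n l k k'"
  shows "step_coeff n l k k' 1 = (if mstep k k' = 0 then -1 else 0)"
proof -
  obtain i where "step_pos k i" using adjacent_imp_step_pos[OF assms] ..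
  then show ?thesis by (simp add: step_coeff_eq mstep_eq straight_coeff_at_1)
qed

lemma step_coeff_differentiable: "step_coeff n l k k' differentiable (at 1)"
  unfolding step_coeff_def by (rule straight_coeff_differentiable)

lemma alphaV_differentiable: "alphaV n l V differentiable (at 1)"
  unfolding alphaV_def by (intro differentiable_prod step_coeff_differentiable)

lemma mV_singleton [simp]: "mV [k] = 0"
  unfolding mV_def by simp

lemma alphaV_at_1_eq_0: "admissible n l V \<Longrightarrow> mV V \<noteq> 0 \<Longrightarrow> alphaV n l V 1 = 0"
proof (induction V)
  case (Cons k V)
  then have "V \<noteq> []" by auto
  with Cons show ?case by (auto simp: alphaV_Cons mV_Cons admissible_Cons step_coeff_at_1)
qed simp

lemma alphaV_has_derivative_0:
  "admissible n l V \<Longrightarrow> 2 \<le> mV V \<Longrightarrow> (alphaV n l V has_field_derivative 0) (at 1)"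
proof (induction V)
  case (Cons k V)
  then have "V \<noteq> []" by (metis mV_singleton not_numeral_le_zero)
  with Cons.prems have adj: "adjacent n l k (hd V)" and adm: "admissible n l V"
    and m: "mV (k # V) = mstep k (hd V) + mV V"
    by (auto simp: admissible_Cons mV_Cons)
  let ?c = "step_coeff n l k (hd V)"
  have "alphaV n l (k # V) = (\<lambda>q. ?c q * alphaV n l V q)"
    using \<open>V \<noteq> []\<close> by (simp add: alphaV_Cons fun_eq_iff)
  moreover have "((\<lambda>q. ?c q * alphaV n l V q) has_field_derivative
      deriv ?c 1 * alphaV n l V 1 + deriv (alphaV n l V) 1 * ?c 1) (at 1)"
    using step_coeff_differentiable alphaV_differentiable
    by (intro DERIV_mult) (simp_all add: DERIV_deriv_iff_real_differentiable)
  moreover have "deriv ?c 1 * alphaV n l V 1 + deriv (alphaV n l V) 1 * ?c 1 = 0"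
  proof (cases "mstep k (hd V) = 0")
    case True
    with m Cons.prems have "2 \<le> mV V" by simp
    then have "deriv (alphaV n l V) 1 = 0" "alphaV n l V 1 = 0"
      using Cons.IH[OF adm] alphaV_at_1_eq_0[OF adm] by (simp_all add: DERIV_imp_deriv)
    then show ?thesis by simp
  next
    case False
    with m Cons.prems have "mV V \<noteq> 0" unfolding mstep_def by (auto split: if_splits)
    then show ?thesis
      using alphaV_at_1_eq_0[OF adm] step_coeff_at_1[OF adj] False by simp
  qed
  ultimately show ?case by simp
qed simp

lemma mset_adjacent_swap:
  assumes "n \<ge> 1" "l \<ge> 1" "adjacent n l k k'" "mstep k k' = 0"
  shows "mset k' = mset k"
proof -
  obtain i where i: "step_pos k i" using adjacent_imp_step_pos[OF assms(3)] ..
  then obtain a b where k': "k' = k[i := a, i + 1 := b]" using adjacentE[OF assms(1-3)] by blast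
  have len: "i + 1 < length k" using i unfolding step_pos_def by blast
  have "k' ! i = k ! (i + 1)" "k' ! (i + 1) = k ! i" using assms(4) mstep_eq[OF i] by (simp_all split: if_splits)
  then have "k' = k[i := k ! (i + 1), i + 1 := k ! i]" using len unfolding k' by (simp add: nth_list_update)
  then show ?thesis using len by (simp add: mset_swap)
qed

lemma mset_last_eq_hd:
  assumes "n \<ge> 1" "l \<ge> 1"
  shows "admissible n l V \<Longrightarrow> mV V = 0 \<Longrightarrow> mset (last V) = mset (hd V)"
proof (induction V)
  case (Cons k V)
  then show ?case
    using mset_adjacent_swap[OF assms] by (cases "V = []") (auto simp: admissible_Cons mV_Cons)
qed simp

lemma expansion_differentiable:
  "n \<ge> 1 \<Longrightarrow> l \<ge> 1 \<Longrightarrow> sorted_wrt (>) w \<Longrightarrow> expansion n l k w differentiable (at 1)"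
  by (simp add: expansion_eq_sum_alphaV differentiable_sum' alphaV_differentiable)

lemma expansion_at_1_eq_0:
  assumes "n \<ge> 1" "l \<ge> 1" "sorted_wrt (>) w" "\<And>V. V \<in> admissible_seqs n l k w \<Longrightarrow> mV V \<noteq> 0"
  shows "expansion n l k w 1 = 0"
  using assms alphaV_at_1_eq_0 by (simp add: expansion_eq_sum_alphaV admissible_seqs_def)

lemma deriv_expansion_at_1:
  assumes "n \<ge> 1" "l \<ge> 1" "sorted_wrt (>) w" "\<And>V. V \<in> admissible_seqs n l k w \<Longrightarrow> mV V \<noteq> 0"
  shows "deriv (expansion n l k w) 1 = (\<Sum>V\<in>{V \<in> admissible_seqs n l k w. mV V = 1}. deriv (alphaV n l V) 1)"
proof -
  have "(expansion n l k w has_field_derivative (\<Sum>V\<in>admissible_seqs n l k w. deriv (alphaV n l V) 1)) (at 1)"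
    unfolding expansion_eq_sum_alphaV[OF assms(1-3)]
    by (intro DERIV_sum) (simp add: DERIV_deriv_iff_real_differentiable alphaV_differentiable)
  moreover have "(\<Sum>V\<in>admissible_seqs n l k w. deriv (alphaV n l V) 1)
      = (\<Sum>V\<in>{V \<in> admissible_seqs n l k w. mV V = 1}. deriv (alphaV n l V) 1)"
  proof (rule sum.mono_neutral_right)
    show "\<forall>V\<in>admissible_seqs n l k w - {V \<in> admissible_seqs n l k w. mV V = 1}. deriv (alphaV n l V) 1 = 0"
    proof
      fix V assume V: "V \<in> admissible_seqs n l k w - {V \<in> admissible_seqs n l k w. mV V = 1}"
      then have "admissible n l V" "2 \<le> mV V" using assms(4)[of V] unfolding admissible_seqs_def by auto
      then show "deriv (alphaV n l V) 1 = 0" by (intro DERIV_imp_deriv alphaV_has_derivative_0)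
    qed
  qed (use finite_admissible_seqs[OF assms(1-3)] in auto)
  ultimately show ?thesis by (simp add: DERIV_imp_deriv)
qed

section \<open>Partitions, beta-sets and the correspondence\<close>

lemma part_pos:
  assumes "is_partition p" "1 \<le> i" "i \<le> length p"
  shows "0 < part p i"
proof -
  have "p ! (i - 1) \<in> set p" using assms(2,3) by simp
  then have "p ! (i - 1) \<noteq> 0" using assms(1) unfolding is_partition_def by metis
  then show ?thesis using assms(2,3) unfolding part_def by simp
qed

lemma part_antimono: "is_partition p \<Longrightarrow> 1 \<le> i \<Longrightarrow> i \<le> j \<Longrightarrow> part p j \<le> part p i"
  unfolding is_partition_def part_def
  using sorted_wrt_nth_less[of "(\<ge>)" p "i - 1" "j - 1"] by (cases "i = j") auto

lemma length_le_psize: "is_partition p \<Longrightarrow> length p \<le> psize p"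
  unfolding is_partition_def psize_def by (induction p) auto

lemma partition_eqI:
  assumes "is_partition p" "is_partition p'" "\<And>i. 1 \<le> i \<Longrightarrow> part p i = part p' i"
  shows "p = p'"
proof -
  have "length p = length p'"
  proof (rule ccontr)
    assume "length p \<noteq> length p'"
    then obtain i where "1 \<le> i" "(i \<le> length p \<and> length p' < i) \<or> (i \<le> length p' \<and> length p < i)"
      by (metis One_nat_def Suc_leI le_refl linorder_neqE_nat not_less_zero not_less_eq_eq)
    then show False using part_pos[OF assms(1)] part_pos[OF assms(2)] assms(3) unfolding part_def
      by (metis less_irrefl not_less)
  qed
  then show ?thesis
  proof (rule nth_equalityI)
    fix j assume "j < length p"
    then show "p ! j = p' ! j"
      using assms(3)[of "j + 1"] \<open>length p = length p'\<close> unfolding part_def by simp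
  qed
qed

lemma beta_nth: "j < psize p \<Longrightarrow> beta s p ! j = int (part p (j + 1)) + s - int j"
  unfolding beta_def by (simp del: upt_Suc)

lemma length_beta: "length (beta s p) = psize p"
  unfolding beta_def by simp

lemma beta_sorted:
  assumes "is_partition p"
  shows "sorted_wrt (>) (beta s p)"
  unfolding sorted_wrt_iff_nth_less
proof (intro allI impI)
  fix i j assume "i < j" "j < length (beta s p)"
  moreover have "part p (j + 1) \<le> part p (i + 1)"
    using part_antimono[OF assms, of "i + 1" "j + 1"] \<open>i < j\<close> by simp
  ultimately show "beta s p ! j < beta s p ! i" by (simp add: beta_nth length_beta)
qed

lemma beta_inj:
  assumes "is_partition p" "is_partition p'" "psize p = psize p'" "beta s p = beta s p'"
  shows "p = p'"
proof (rule partition_eqI[OF assms(1,2)])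
  fix i :: nat assume "1 \<le> i"
  show "part p i = part p' i"
  proof (cases "i \<le> psize p")
    case True
    then show ?thesis using arg_cong[where f="\<lambda>xs. xs ! (i - 1)", OF assms(4)] assms(3) \<open>1 \<le> i\<close>
      by (simp add: beta_nth)
  next
    case False
    then show ?thesis using length_le_psize[OF assms(1)] length_le_psize[OF assms(2)] assms(3)
      by (simp add: part_def)
  qed
qed

definition beta_set :: "int \<Rightarrow> nat list \<Rightarrow> int set" where
  "beta_set s p = range (\<lambda>j. int (part p (j + 1)) + s - int j)"

lemma beta_set_iff: "x \<in> beta_set s p \<longleftrightarrow> (\<exists>i\<ge>1. x = int (part p i) + s + 1 - int i)"
proof
  assume "x \<in> beta_set s p"
  then obtain j where "x = int (part p (j + 1)) + s - int j" unfolding beta_set_def by blast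
  then show "\<exists>i\<ge>1. x = int (part p i) + s + 1 - int i" by (intro exI[of _ "j + 1"]) simp
next
  assume "\<exists>i\<ge>1. x = int (part p i) + s + 1 - int i"
  then obtain i where "1 \<le> i" "x = int (part p (i - 1 + 1)) + s - int (i - 1)" by auto
  then show "x \<in> beta_set s p" unfolding beta_set_def by blast
qed

lemma beta_set_inj:
  assumes "is_partition p" "is_partition p'" "beta_set s p = beta_set s p'"
  shows "p = p'"
proof (rule partition_eqI[OF assms(1,2)])
  have dec: "int (part q (j + 1)) + s - int j < int (part q (i + 1)) + s - int i"
    if "is_partition q" "i < j" for q i j
    using part_antimono[OF that(1), of "i + 1" "j + 1"] that(2) by simp
  have eq: "(\<lambda>j. int (part p (j + 1)) + s - int j) = (\<lambda>j. int (part p' (j + 1)) + s - int j)"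
    using assms(3) unfolding beta_set_def
    by (intro strict_antimono_range_eq) (use dec assms(1,2) in auto)
  then show "part p i = part p' i" if "1 \<le> i" for i
    using fun_cong[OF eq, of "i - 1"] that by simp
qed

lemma residue_decomposition:
  assumes "n \<ge> 1" "l \<ge> 1"
  shows "k = cc n l k + int n * (dd n l k - 1) + int n * int l * mm n l k"
proof -
  define u where "u = k - 1"
  have "u div int n div int l = u div (int n * int l)" using assms by (simp add: zdiv_zmult2_eq)
  moreover have "u = u mod int n + int n * (u div int n mod int l + int l * (u div int n div int l))"
    by (metis div_mult_mod_eq mult.commute add.commute)
  ultimately show ?thesis unfolding cc_def dd_def mm_def u_def[symmetric]
    by (simp add: u_def algebra_simps)
qed

lemma residue_from_phi:
  assumes "n \<ge> 1"
  shows "cc n l k = (phi n l k - 1) mod int n + 1" "mm n l k = (phi n l k - 1) div int n"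
  using assms unfolding phi_def cc_def by simp_all

lemma phi_dd_inj:
  assumes "n \<ge> 1" "l \<ge> 1" "phi n l k = phi n l k'" "dd n l k = dd n l k'"
  shows "k = k'"
  using residue_decomposition[OF assms(1,2), of k] residue_decomposition[OF assms(1,2), of k']
    residue_from_phi[OF assms(1)] assms(3,4) by metis

definition multi_beta_set :: "nat \<Rightarrow> int list \<Rightarrow> nat list list \<Rightarrow> (int \<times> int) set" where
  "multi_beta_set l sl P = (\<Union>b\<in>{1..l}. (\<lambda>x. (x, int b)) ` beta_set (sl ! (b - 1)) (P ! (b - 1)))"

lemma multi_beta_set_component:
  "1 \<le> b \<Longrightarrow> b \<le> l \<Longrightarrow> {x. (x, int b) \<in> multi_beta_set l sl P} = beta_set (sl ! (b - 1)) (P ! (b - 1))"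
  unfolding multi_beta_set_def by auto

lemma corresp_iff:
  "corresp n l sl P p \<longleftrightarrow>
    multi_beta_set l sl P = (\<lambda>k. (phi n l k, dd n l k)) ` beta_set (sum_list sl) p"
proof -
  have "{(int (part (P ! (b - 1)) i) + sl ! (b - 1) + 1 - int i, int b) | i b. 1 \<le> i \<and> 1 \<le> b \<and> b \<le> l}
      = multi_beta_set l sl P" (is "?L = _")
  proof (intro set_eqI iffI)
    fix z assume "z \<in> ?L"
    then obtain i b where "z = (int (part (P ! (b - 1)) i) + sl ! (b - 1) + 1 - int i, int b)"
      "1 \<le> i" "b \<in> {1..l}" by auto
    then have "b \<in> {1..l}" "z = (fst z, int b)" "fst z \<in> beta_set (sl ! (b - 1)) (P ! (b - 1))"
      unfolding beta_set_iff by auto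
    then show "z \<in> multi_beta_set l sl P" unfolding multi_beta_set_def by blast
  next
    fix z assume "z \<in> multi_beta_set l sl P"
    then obtain b x where "z = (x, int b)" "1 \<le> b" "b \<le> l" "x \<in> beta_set (sl ! (b - 1)) (P ! (b - 1))"
      unfolding multi_beta_set_def by auto
    then show "z \<in> ?L" unfolding beta_set_iff by auto
  qed
  moreover have "{(phi n l k, dd n l k) | k. \<exists>i\<ge>1. k = int (part p i) + sum_list sl + 1 - int i}
      = (\<lambda>k. (phi n l k, dd n l k)) ` beta_set (sum_list sl) p"
    unfolding beta_set_iff[symmetric] by (rule Setcompr_eq_image)
  ultimately show ?thesis unfolding corresp_def by simp
qed

lemma corresp_partition_unique:
  assumes "n \<ge> 1" "l \<ge> 1" "is_partition p" "is_partition p'"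
    "corresp n l sl P p" "corresp n l sl P p'"
  shows "p = p'"
proof -
  have "inj (\<lambda>k. (phi n l k, dd n l k))" using phi_dd_inj[OF assms(1,2)] by (auto intro: injI)
  then have "beta_set (sum_list sl) p = beta_set (sum_list sl) p'"
    using assms(5,6) unfolding corresp_iff by (simp add: inj_image_eq_iff)
  then show ?thesis by (rule beta_set_inj[OF assms(3,4)])
qed

lemma corresp_multipartition_unique:
  assumes "P \<in> multipartitions l m" "Q \<in> multipartitions l m" "corresp n l sl P p" "corresp n l sl Q p"
  shows "P = Q"
proof (rule nth_equalityI)
  show "length P = length Q" using assms(1,2) unfolding multipartitions_def by simp
  fix j assume "j < length P"
  then have b: "1 \<le> j + 1" "j + 1 \<le> l" and "j < length Q"
    using assms(1,2) unfolding multipartitions_def by auto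
  have "multi_beta_set l sl P = multi_beta_set l sl Q" using assms(3,4) unfolding corresp_iff by simp
  then have "beta_set (sl ! j) (P ! j) = beta_set (sl ! j) (Q ! j)"
    using multi_beta_set_component[OF b, of sl P] multi_beta_set_component[OF b, of sl Q] by simp
  moreover have "is_partition (P ! j)" "is_partition (Q ! j)"
    using assms(1,2) \<open>j < length P\<close> \<open>j < length Q\<close> unfolding multipartitions_def by auto
  ultimately show "P ! j = Q ! j" using beta_set_inj by blast
qed

lemma a_coef_eq_a_part:
  assumes "n \<ge> 1" "l \<ge> 1" "is_partition lam" "is_partition mu" "corresp n l sl P lam" "corresp n l sl Q mu"
  shows "a_coef n l sl P Q = a_part n l (sum_list sl) lam mu"
proof -
  have "(THE p. is_partition p \<and> corresp n l sl P p) = lam" "(THE p. is_partition p \<and> corresp n l sl Q p) = mu"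
    using assms corresp_partition_unique[OF assms(1,2)] by (blast intro: the_equality)+
  then show ?thesis unfolding a_coef_def by simp
qed

section \<open>The derivative of the coefficients at q = 1\<close>

lemma deriv_a_part_at_1:
  assumes "n \<ge> 1" "l \<ge> 1" "is_partition lam" "is_partition mu" "psize lam = psize mu" "lam \<noteq> mu"
  shows "deriv (a_part n l s lam mu) 1
    = eps n l s lam mu * (\<Sum>V\<in>{V. good_seq n l s lam mu V}. deriv (alphaV n l V) 1)"
proof -
  let ?k = "omega_act (beta s mu)" and ?w = "beta s lam"
  have sorted: "sorted_wrt (>) ?w" "sorted_wrt (>) (beta s mu)" by (simp_all add: beta_sorted assms(3,4))
  have not_only_swaps: "mV V \<noteq> 0" if "V \<in> admissible_seqs n l ?k ?w" for V
  proof
    assume "mV V = 0"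
    moreover have "admissible n l V" "hd V = ?k" "last V = ?w" using that unfolding admissible_seqs_def by auto
    ultimately have "mset ?w = mset (beta s mu)"
      using mset_last_eq_hd[OF assms(1,2), of V] by (simp add: omega_act_def)
    then have "?w = beta s mu" by (intro strict_antisorted_equal[OF sorted] mset_eq_setD)
    then show False using beta_inj[OF assms(3-5)] assms(6) by simp
  qed
  have "deriv (a_part n l s lam mu) 1 = eps n l s lam mu * deriv (expansion n l ?k ?w) 1"
    unfolding a_part_def
    using expansion_differentiable[OF assms(1,2) sorted(1)]
      expansion_at_1_eq_0[OF assms(1,2) sorted(1) not_only_swaps]
    by (subst deriv_mult_at_root) (simp_all add: eps_def power_add)
  moreover have "{V \<in> admissible_seqs n l ?k ?w. mV V = 1} = {V. good_seq n l s lam mu V}"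
    unfolding good_seq_def admissible_seqs_def by auto
  ultimately show ?thesis
    using deriv_expansion_at_1[OF assms(1,2) sorted(1) not_only_swaps] by simp
qed

theorem mainTheorem14:
  fixes n l m r :: nat and sl :: "int list" and P Q :: "nat list list" and lam mu :: "nat list"
  assumes "n \<ge> 1" and "l \<ge> 1" and "m \<ge> 1" and "length sl = l"
    and "P \<in> multipartitions l m" and "Q \<in> multipartitions l m" and "P \<noteq> Q"
    and "is_partition lam" and "is_partition mu"
    and "corresp n l sl P lam" and "corresp n l sl Q mu"
    and "psize lam = r" and "psize mu = r"
  shows "deriv (a_coef n l sl P Q) 1
         = eps n l (sum_list sl) lam mu
           * (\<Sum>V\<in>{V. good_seq n l (sum_list sl) lam mu V}. deriv (alphaV n l V) 1)"
proof -
  have "lam \<noteq> mu"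
    using corresp_multipartition_unique[OF assms(5,6,10)] assms(7,11) by blast
  moreover have "a_coef n l sl P Q = a_part n l (sum_list sl) lam mu"
    by (rule a_coef_eq_a_part[OF assms(1,2,8-11)])
  ultimately show ?thesis
    using deriv_a_part_at_1[OF assms(1,2,8,9)] assms(12,13) by simp
qed

end
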